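(* Let $X$ be as in the context and assume $X$ is recurrent. Suppose there exist non-negative functions $f_1,f_2$ on $\mathbb S$ such that (i) $\lim_{x\to\infty}f_1(x)=\infty$ and $\lim_{x\to\infty}f_2(x)/f_1(x)=\infty$; (ii) $\mathcal A f_1(x)\ge0$ for all sufficiently large $x\in\mathbb S$; (iii) $\mathcal A f_2(x)\lesssim 1$. Then $X$ is null recurrent.
   Context: Let $\mathbb S\subseteq\mathbb Z_{\ge0}$ be an infinite set and let $X$ be an irreducible continuous-time Markov chain on $\mathbb S$ whose generator acts on functions $f:\mathbb S\to\mathbb R$ by $\mathcal A f(x)=\sum_{\eta\in\mathbb Z}\lambda_\eta(x)\big(f(x+\eta)-f(x)\big)$, where $\lambda_\eta(x)$ is the rate of the jump $x\to x+\eta$ (and $\lambda_\eta(x)=0$ whenever $x+\eta\notin\mathbb S$). Standing assumption: (a) there is a finite set $\Gamma\subset\mathbb Z$ such that $\lambda_\eta\equiv0$ for $\eta\notin\Gamma$; (b) $0\le\lambda_\eta(x)<\infty$ for all $x,\eta$. Notation: $f\lesssim g$ means there is $C>0$ with $f(x)\le Cg(x)$ for all sufficiently large $x\in\mathbb S$. $X$ is null recurrent if it is recurrent but $\mathbb E_x[\tau_x]=\infty$ ($\tau_x$ the first return time to $x$ after the first jump). *)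

theory Defs
  imports "HOL-Probability.Probability"
begin

text \<open>A continuous-time Markov chain on a state space S (a subset of the naturals) with
  jump rates lam eta x (rate of the jump x to x + eta), eta an integer.\<close>

definition jumps :: "(int \<Rightarrow> nat \<Rightarrow> real) \<Rightarrow> int set" where
  "jumps lam = {\<eta>. \<eta> \<noteq> 0 \<and> (\<exists>x. lam \<eta> x \<noteq> 0)}"

definition shift :: "nat \<Rightarrow> int \<Rightarrow> nat" where
  "shift x \<eta> = nat (int x + \<eta>)"

definition gen :: "(int \<Rightarrow> nat \<Rightarrow> real) \<Rightarrow> (nat \<Rightarrow> real) \<Rightarrow> nat \<Rightarrow> real" where
  "gen lam f x = (\<Sum>\<eta>\<in>jumps lam. lam \<eta> x * (f (shift x \<eta>) - f x))"

definition qrate :: "(int \<Rightarrow> nat \<Rightarrow> real) \<Rightarrow> nat \<Rightarrow> real" where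
  "qrate lam y = (\<Sum>\<eta>\<in>jumps lam. lam \<eta> y)"

definition irreducible_chain :: "nat set \<Rightarrow> (int \<Rightarrow> nat \<Rightarrow> real) \<Rightarrow> bool" where
  "irreducible_chain S lam \<longleftrightarrow>
     (\<forall>x\<in>S. \<forall>y\<in>S. (x, y) \<in> {(a, shift a \<eta>) | a \<eta>. a \<in> S \<and> \<eta> \<noteq> 0 \<and> lam \<eta> a > 0}\<^sup>*)"

text \<open>The randomness is an i.i.d. sequence of pairs (u_n, e_n),
  u_n uniform on [0,1), e_n standard exponential. At step n, in state y, the chain waits
  e_n / q(y) and then jumps to y + eta, where eta is chosen from the (sorted) finite jump set with
  probability lam eta y / q(y) by inverting the cumulative distribution at u_n.\<close>

definition base_measure :: "(real \<times> real) measure" where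
  "base_measure = uniform_measure lborel {0..<1} \<Otimes>\<^sub>M density lborel (\<lambda>t. ennreal (exponential_density 1 t))"

definition Omega :: "(nat \<Rightarrow> real \<times> real) measure" where
  "Omega = PiM UNIV (\<lambda>_. base_measure)"

definition next_state :: "(int \<Rightarrow> nat \<Rightarrow> real) \<Rightarrow> nat \<Rightarrow> real \<Rightarrow> nat" where
  "next_state lam y u =
     (let js = sorted_list_of_set (jumps lam);
          cum = (\<lambda>k. \<Sum>i<k. lam (js ! i) y)
      in case find (\<lambda>k. u * qrate lam y < cum (Suc k)) [0..<length js] of
           None \<Rightarrow> y
         | Some k \<Rightarrow> shift y (js ! k))"

primrec jchain :: "(int \<Rightarrow> nat \<Rightarrow> real) \<Rightarrow> nat \<Rightarrow> (nat \<Rightarrow> real \<times> real) \<Rightarrow> nat \<Rightarrow> nat" where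
  "jchain lam x \<omega> 0 = x"
| "jchain lam x \<omega> (Suc n) = next_state lam (jchain lam x \<omega> n) (fst (\<omega> n))"

definition hold :: "(int \<Rightarrow> nat \<Rightarrow> real) \<Rightarrow> nat \<Rightarrow> (nat \<Rightarrow> real \<times> real) \<Rightarrow> nat \<Rightarrow> real" where
  "hold lam x \<omega> n = snd (\<omega> n) / qrate lam (jchain lam x \<omega> n)"

definition return_time :: "(int \<Rightarrow> nat \<Rightarrow> real) \<Rightarrow> nat \<Rightarrow> (nat \<Rightarrow> real \<times> real) \<Rightarrow> ennreal" where
  "return_time lam x \<omega> =
     (if \<exists>n\<ge>1. jchain lam x \<omega> n = x
      then ennreal (\<Sum>k < (LEAST n. n \<ge> 1 \<and> jchain lam x \<omega> n = x). hold lam x \<omega> k)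
      else \<infinity>)"

definition recurrent_chain :: "nat set \<Rightarrow> (int \<Rightarrow> nat \<Rightarrow> real) \<Rightarrow> bool" where
  "recurrent_chain S lam \<longleftrightarrow>
     (\<forall>x\<in>S. emeasure Omega {\<omega> \<in> space Omega. \<exists>n\<ge>1. jchain lam x \<omega> n = x} = 1)"

definition null_recurrent_chain :: "nat set \<Rightarrow> (int \<Rightarrow> nat \<Rightarrow> real) \<Rightarrow> bool" where
  "null_recurrent_chain S lam \<longleftrightarrow>
     recurrent_chain S lam \<and> (\<forall>x\<in>S. (\<integral>\<^sup>+ \<omega>. return_time lam x \<omega> \<partial>Omega) = \<infinity>)"

abbreviation at_top_in :: "nat set \<Rightarrow> nat filter" where
  "at_top_in S \<equiv> inf at_top (principal S)"

end

theory Submission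
  imports Defs
begin

text \<open>Fix \<open>x\<^sub>0\<close>, let \<open>A = {..N}\<close> contain \<open>x\<^sub>0\<close> and the states where the drift conditions may
  fail, and pick \<open>y\<close> with \<open>f\<^sub>1 y > max\<^sub>A f\<^sub>1\<close>. Since \<open>f\<^sub>1\<close> is a submartingale and \<open>f\<^sub>2\<close> grows at most
  linearly in time until \<open>A\<close> is hit, optional stopping gives
  \<open>f\<^sub>1 y \<le> max\<^sub>A f\<^sub>1 + e (f\<^sub>2 y + C E\<^sub>y \<tau>\<^sub>A) + K\<^sub>e P\<^sub>y(\<tau>\<^sub>A > n)\<close> whenever \<open>f\<^sub>1 \<le> e f\<^sub>2 + K\<^sub>e\<close>, and
  \<open>f\<^sub>2 / f\<^sub>1 \<rightarrow> \<infinity>\<close> allows every \<open>e > 0\<close>. Hence either \<open>x\<^sub>0\<close> is avoided from \<open>y\<close> with positive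
  probability, or \<open>E\<^sub>y \<tau>\<^sub>x\<^sub>0 = \<infinity>\<close>. Both properties propagate backwards along an irreducibility path
  from \<open>x\<^sub>0\<close> to \<open>y\<close> up to a neighbour of \<open>x\<^sub>0\<close>: the first contradicts recurrence, the second
  gives \<open>E\<^sub>x\<^sub>0 \<tau>\<^sub>x\<^sub>0 = \<infinity>\<close>. All quantities are handled through their \<open>n\<close>-step truncations, which
  satisfy first-jump recursions on the explicit probability space.\<close>

section \<open>Potential theory of the jump chain\<close>

locale rate_chain =
  fixes S :: "nat set" and lam :: "int \<Rightarrow> nat \<Rightarrow> real"
  assumes infinite_states: "infinite S"
    and finite_support: "\<exists>\<Gamma>. finite \<Gamma> \<and> (\<forall>\<eta>. \<eta> \<notin> \<Gamma> \<longrightarrow> (\<forall>x. lam \<eta> x = 0))"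
    and rates_nonneg: "\<And>\<eta> x. lam \<eta> x \<ge> 0"
    and rates_stay: "\<And>\<eta> x. x \<in> S \<Longrightarrow> int x + \<eta> \<notin> int ` S \<Longrightarrow> lam \<eta> x = 0"
    and irreducible: "irreducible_chain S lam"
begin

abbreviation J :: "int set" where
  "J \<equiv> jumps lam"

abbreviation q :: "nat \<Rightarrow> real" where
  "q \<equiv> qrate lam"

definition trans_prob :: "nat \<Rightarrow> int \<Rightarrow> real" where
  "trans_prob x \<eta> = lam \<eta> x / q x"

definition step_mean :: "(nat \<Rightarrow> real) \<Rightarrow> nat \<Rightarrow> real" where
  "step_mean F x = (\<Sum>\<eta>\<in>J. trans_prob x \<eta> * F (shift x \<eta>))"

definition jump_rel :: "(nat \<times> nat) set" where
  "jump_rel = {(a, shift a \<eta>) | a \<eta>. a \<in> S \<and> \<eta> \<noteq> 0 \<and> lam \<eta> a > 0}"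

lemma finite_jumps: "finite J"
proof -
  obtain \<Gamma> where "finite \<Gamma>" "\<forall>\<eta>. \<eta> \<notin> \<Gamma> \<longrightarrow> (\<forall>x. lam \<eta> x = 0)"
    using finite_support by blast
  then show ?thesis
    unfolding jumps_def by (auto intro: finite_subset)
qed

lemma mem_jumps: "\<eta> \<noteq> 0 \<Longrightarrow> lam \<eta> x > 0 \<Longrightarrow> \<eta> \<in> J"
  unfolding jumps_def by (auto intro!: exI[of _ x])

lemma shift_mem:
  assumes "x \<in> S" "lam \<eta> x \<noteq> 0"
  shows "shift x \<eta> \<in> S"
proof -
  obtain s where "s \<in> S" "int x + \<eta> = int s"
    using rates_stay assms by blast
  then show ?thesis unfolding shift_def by simp
qed

lemma jump_rel_connected: "x \<in> S \<Longrightarrow> y \<in> S \<Longrightarrow> (x, y) \<in> jump_rel\<^sup>*"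
  using irreducible unfolding irreducible_chain_def jump_rel_def by blast

lemma qrate_nonneg: "q x \<ge> 0"
  unfolding qrate_def by (simp add: sum_nonneg rates_nonneg)

lemma qrate_pos:
  assumes "x \<in> S"
  shows "q x > 0"
proof -
  obtain y where "y \<in> S" "y \<noteq> x"
    using infinite_states by (metis finite.simps infinite_imp_nonempty insertCI subsetI finite_subset)
  then obtain z where "(x, z) \<in> jump_rel"
    using jump_rel_connected[OF assms] by (metis converse_rtranclE)
  then obtain \<eta> where \<eta>: "\<eta> \<noteq> 0" "lam \<eta> x > 0"
    unfolding jump_rel_def by blast
  have "lam \<eta> x \<le> q x"
    unfolding qrate_def
    by (rule member_le_sum) (use \<eta> mem_jumps finite_jumps rates_nonneg in auto)
  with \<eta> show ?thesis by linarith
qed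

lemma trans_prob_nonneg: "trans_prob x \<eta> \<ge> 0"
  unfolding trans_prob_def by (simp add: rates_nonneg qrate_nonneg)

lemma trans_prob_pos: "x \<in> S \<Longrightarrow> lam \<eta> x > 0 \<Longrightarrow> trans_prob x \<eta> > 0"
  using qrate_pos unfolding trans_prob_def by simp

lemma sum_trans_prob: "x \<in> S \<Longrightarrow> (\<Sum>\<eta>\<in>J. trans_prob x \<eta>) = 1"
  using qrate_pos[of x] unfolding trans_prob_def qrate_def by (simp add: sum_divide_distrib[symmetric])

lemma trans_prob_le_1: "x \<in> S \<Longrightarrow> \<eta> \<in> J \<Longrightarrow> trans_prob x \<eta> \<le> 1"
  using sum_trans_prob[of x] member_le_sum[of \<eta> J "trans_prob x"] trans_prob_nonneg finite_jumps
  by force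

lemma step_mean_mono:
  assumes "x \<in> S" "\<And>y. y \<in> S \<Longrightarrow> F y \<le> G y"
  shows "step_mean F x \<le> step_mean G x"
  unfolding step_mean_def
proof (rule sum_mono)
  fix \<eta>
  show "trans_prob x \<eta> * F (shift x \<eta>) \<le> trans_prob x \<eta> * G (shift x \<eta>)"
  proof (cases "lam \<eta> x = 0")
    case False
    then show ?thesis
      using shift_mem[OF assms(1) False] assms(2) trans_prob_nonneg by (simp add: mult_left_mono)
  qed (simp add: trans_prob_def)
qed

lemma step_mean_const: "x \<in> S \<Longrightarrow> step_mean (\<lambda>_. c) x = c"
  using sum_trans_prob unfolding step_mean_def by (simp add: sum_distrib_right[symmetric])

lemma step_mean_nonneg: "x \<in> S \<Longrightarrow> (\<And>y. y \<in> S \<Longrightarrow> 0 \<le> F y) \<Longrightarrow> 0 \<le> step_mean F x"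
  using step_mean_mono[of x "\<lambda>_. 0" F] step_mean_const[of x 0] by simp

lemma step_mean_linear: "step_mean (\<lambda>y. F y + c * G y) x = step_mean F x + c * step_mean G x"
  unfolding step_mean_def by (simp add: algebra_simps sum.distrib sum_distrib_left)

lemma step_mean_gen: "x \<in> S \<Longrightarrow> step_mean f x = f x + gen lam f x / q x"
  using qrate_pos[of x]
  unfolding step_mean_def gen_def qrate_def trans_prob_def
  by (simp add: field_simps sum_divide_distrib[symmetric] sum_subtractf sum_distrib_left sum_distrib_right)

lemma step_mean_ge_jump:
  assumes "x \<in> S" "\<eta> \<in> J" "\<And>y. y \<in> S \<Longrightarrow> 0 \<le> F y"
  shows "trans_prob x \<eta> * F (shift x \<eta>) \<le> step_mean F x"
  unfolding step_mean_def
proof (rule member_le_sum[OF assms(2) _ finite_jumps])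
  fix \<eta>'
  show "0 \<le> trans_prob x \<eta>' * F (shift x \<eta>')"
  proof (cases "lam \<eta>' x = 0")
    case False
    then show ?thesis using shift_mem[OF assms(1) False] assms(3) trans_prob_nonneg by simp
  qed (simp add: trans_prob_def)
qed

text \<open>\<open>stopped_value B g h n x\<close> is the expectation, for the jump chain started at \<open>x\<close> and its
  hitting time \<open>\<tau>\<close> of \<open>B\<close>, of \<open>g(X\<^sub>\<tau>)\<close> on \<open>\<tau> \<le> n\<close> and of \<open>h(X\<^sub>n)\<close> on \<open>\<tau> > n\<close>;
  \<open>mean_hitting_time B n x\<close> is the expected real time elapsed before \<open>min \<tau> n\<close> jumps.\<close>

primrec stopped_value :: "nat set \<Rightarrow> (nat \<Rightarrow> real) \<Rightarrow> (nat \<Rightarrow> real) \<Rightarrow> nat \<Rightarrow> nat \<Rightarrow> real" where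
  "stopped_value B g h 0 x = (if x \<in> B then g x else h x)"
| "stopped_value B g h (Suc n) x =
     (if x \<in> B then g x else step_mean (stopped_value B g h n) x)"

abbreviation survival :: "nat set \<Rightarrow> nat \<Rightarrow> nat \<Rightarrow> real" where
  "survival B \<equiv> stopped_value B (\<lambda>_. 0) (\<lambda>_. 1)"

primrec mean_hitting_time :: "nat set \<Rightarrow> nat \<Rightarrow> nat \<Rightarrow> real" where
  "mean_hitting_time B 0 x = 0"
| "mean_hitting_time B (Suc n) x =
     (if x \<in> B then 0 else 1 / q x + step_mean (mean_hitting_time B n) x)"

lemma mean_hitting_time_nonneg: "x \<in> S \<Longrightarrow> 0 \<le> mean_hitting_time B n x"
proof (induction n arbitrary: x)
  case (Suc n)
  then show ?case using step_mean_nonneg qrate_nonneg by simp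
qed simp

lemma survival_nonneg: "x \<in> S \<Longrightarrow> 0 \<le> survival B n x"
  by (induction n arbitrary: x) (auto intro: step_mean_nonneg)

lemma survival_le_1: "x \<in> S \<Longrightarrow> survival B n x \<le> 1"
proof (induction n arbitrary: x)
  case (Suc n)
  then show ?case using step_mean_mono[of x _ "\<lambda>_. 1"] step_mean_const by fastforce
qed simp

lemma survival_antimono:
  "x \<in> S \<Longrightarrow> B \<subseteq> B' \<Longrightarrow> survival B' n x \<le> survival B n x"
proof (induction n arbitrary: x)
  case (Suc n)
  then show ?case
    using step_mean_mono[of x "survival B' n" "survival B n"] survival_nonneg[of x B "Suc n"]
    by (cases "x \<in> B'") auto
qed auto

lemma mean_hitting_time_antimono:
  "x \<in> S \<Longrightarrow> B \<subseteq> B' \<Longrightarrow> mean_hitting_time B' n x \<le> mean_hitting_time B n x"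
proof (induction n arbitrary: x)
  case (Suc n)
  then show ?case
    using step_mean_mono[of x "mean_hitting_time B' n" "mean_hitting_time B n"]
      mean_hitting_time_nonneg[of x B "Suc n"]
    by (cases "x \<in> B'") auto
qed simp

lemma le_stopped_value_of_subharmonic:
  assumes "\<And>x. x \<in> S \<Longrightarrow> x \<notin> B \<Longrightarrow> 0 \<le> gen lam f x"
  shows "x \<in> S \<Longrightarrow> f x \<le> stopped_value B f f n x"
proof (induction n arbitrary: x)
  case (Suc n)
  show ?case
  proof (cases "x \<in> B")
    case False
    have "f x \<le> step_mean f x"
      using step_mean_gen[OF Suc.prems] assms[OF Suc.prems False] qrate_pos[OF Suc.prems] by simp
    also have "\<dots> \<le> step_mean (stopped_value B f f n) x"
      by (rule step_mean_mono[OF Suc.prems Suc.IH])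
    finally show ?thesis using False by simp
  qed simp
qed simp

lemma stopped_value_le_drift:
  assumes "\<And>x. x \<in> S \<Longrightarrow> x \<notin> B \<Longrightarrow> gen lam f x \<le> C" "0 \<le> C"
  shows "x \<in> S \<Longrightarrow> stopped_value B f f n x \<le> f x + C * mean_hitting_time B n x"
proof (induction n arbitrary: x)
  case (Suc n)
  show ?case
  proof (cases "x \<in> B")
    case False
    have "step_mean (stopped_value B f f n) x
        \<le> step_mean (\<lambda>y. f y + C * mean_hitting_time B n y) x"
      by (rule step_mean_mono[OF Suc.prems Suc.IH])
    also have "\<dots> = step_mean f x + C * step_mean (mean_hitting_time B n) x"
      by (rule step_mean_linear)
    also have "\<dots> \<le> f x + C / q x + C * step_mean (mean_hitting_time B n) x"
      using step_mean_gen[OF Suc.prems] assms(1)[OF Suc.prems False] qrate_pos[OF Suc.prems]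
      by (simp add: divide_right_mono)
    finally show ?thesis using False by (simp add: algebra_simps)
  qed simp
qed simp

lemma stopped_value_le_dominated:
  assumes "\<And>x. x \<in> S \<Longrightarrow> x \<in> B \<Longrightarrow> f x \<le> M" "0 \<le> M"
    and "\<And>x. x \<in> S \<Longrightarrow> f x \<le> e * g x + K" "0 \<le> e" "0 \<le> K"
    and "\<And>x. x \<in> S \<Longrightarrow> 0 \<le> g x"
  shows "x \<in> S \<Longrightarrow> stopped_value B f f n x \<le> M + e * stopped_value B g g n x + K * survival B n x"
proof (induction n arbitrary: x)
  case 0
  then show ?case using assms mult_nonneg_nonneg[of e "g x"] by fastforce
next
  case (Suc n)
  show ?case
  proof (cases "x \<in> B")
    case False
    have "step_mean (stopped_value B f f n) x
        \<le> step_mean (\<lambda>y. M + e * stopped_value B g g n y + K * survival B n y) x"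
      by (rule step_mean_mono[OF Suc.prems Suc.IH])
    also have "\<dots> = M + e * step_mean (stopped_value B g g n) x + K * step_mean (survival B n) x"
      using step_mean_linear[of "\<lambda>y. M + e * stopped_value B g g n y"] step_mean_linear[of "\<lambda>_. M"]
        step_mean_const[OF Suc.prems] by simp
    finally show ?thesis using False by simp
  next
    case True
    then show ?thesis using assms Suc.prems mult_nonneg_nonneg[of e "g x"] by fastforce
  qed
qed

lemma bounded_hitting_time_imp_survival:
  assumes y: "y \<in> S"
    and sub: "\<And>x. x \<in> S \<Longrightarrow> x \<notin> A \<Longrightarrow> 0 \<le> gen lam f1 x"
    and drift: "\<And>x. x \<in> S \<Longrightarrow> x \<notin> A \<Longrightarrow> gen lam f2 x \<le> C" "0 \<le> C"
    and f2_nonneg: "\<And>x. x \<in> S \<Longrightarrow> 0 \<le> f2 x"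
    and dominated: "\<And>e. 0 < e \<Longrightarrow> \<exists>K\<ge>0. \<forall>x\<in>S. f1 x \<le> e * f2 x + K"
    and bounded_on_A: "\<And>x. x \<in> S \<Longrightarrow> x \<in> A \<Longrightarrow> f1 x \<le> M" "0 \<le> M" "M < f1 y"
    and hitting_time: "\<And>n. mean_hitting_time A n y \<le> T"
  shows "\<exists>d>0. \<forall>n. d \<le> survival A n y"
proof (rule ccontr)
  assume "\<not> ?thesis"
  then have vanishing: "\<exists>n. survival A n y < d" if "0 < d" for d
    using that by (auto simp: not_le)
  define L where "L = f2 y + C * T"
  define gap where "gap = f1 y - M"
  define e where "e = gap / (2 * (L + 1))"
  have "0 \<le> T" using hitting_time[of 0] by simp
  then have L: "0 \<le> L" unfolding L_def using f2_nonneg[OF y] drift(2) by simp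
  have gap: "0 < gap" using bounded_on_A(3) unfolding gap_def by simp
  then have e: "0 < e" unfolding e_def using L by simp
  obtain K where K: "0 \<le> K" "\<And>x. x \<in> S \<Longrightarrow> f1 x \<le> e * f2 x + K"
    using dominated[OF e] by blast
  obtain n where n: "survival A n y < gap / (2 * (K + 1))"
    using vanishing[of "gap / (2 * (K + 1))"] gap K(1) by auto
  have "stopped_value A f2 f2 n y \<le> f2 y + C * mean_hitting_time A n y"
    by (rule stopped_value_le_drift[OF drift y])
  also have "\<dots> \<le> L"
    unfolding L_def using hitting_time[of n] drift(2) by (simp add: mult_left_mono)
  finally have "e * stopped_value A f2 f2 n y \<le> e * L"
    using e by (simp add: mult_left_mono)
  also have "\<dots> < gap / 2"
    unfolding e_def using gap L by (simp add: field_simps)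
  finally have f2_part: "e * stopped_value A f2 f2 n y < gap / 2" .
  have "K * survival A n y \<le> K * (gap / (2 * (K + 1)))"
    using n K(1) by (intro mult_left_mono) auto
  also have "\<dots> \<le> gap / 2"
    using K(1) gap by (simp add: field_simps)
  finally have survival_part: "K * survival A n y \<le> gap / 2" .
  have "f1 y \<le> stopped_value A f1 f1 n y"
    by (rule le_stopped_value_of_subharmonic[OF sub y])
  also have "\<dots> \<le> M + e * stopped_value A f2 f2 n y + K * survival A n y"
    by (rule stopped_value_le_dominated[OF bounded_on_A(1,2) K(2) less_imp_le[OF e] K(1) f2_nonneg y])
  finally show False
    using f2_part survival_part unfolding gap_def by simp
qed

definition positive_avoidance :: "nat \<Rightarrow> nat \<Rightarrow> bool" where
  "positive_avoidance x0 z \<longleftrightarrow> z \<in> S \<and> (\<exists>d>0. \<forall>n. d \<le> survival {x0} n z)"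

definition unbounded_hitting_time :: "nat \<Rightarrow> nat \<Rightarrow> bool" where
  "unbounded_hitting_time x0 z \<longleftrightarrow> z \<in> S \<and> (\<forall>T. \<exists>n. T < mean_hitting_time {x0} n z)"

lemma positive_avoidance_backward:
  assumes a: "a \<in> S" "\<eta> \<in> J" "lam \<eta> a > 0" "a \<noteq> x0"
    and avoid: "positive_avoidance x0 (shift a \<eta>)"
  shows "positive_avoidance x0 a"
proof -
  obtain d where d: "0 < d" "\<And>n. d \<le> survival {x0} n (shift a \<eta>)" and b: "shift a \<eta> \<in> S"
    using avoid unfolding positive_avoidance_def by blast
  have p: "0 < trans_prob a \<eta>" "trans_prob a \<eta> \<le> 1"
    using trans_prob_pos trans_prob_le_1 a by auto
  have "trans_prob a \<eta> * d \<le> survival {x0} n a" for n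
  proof (cases n)
    case 0
    have "d \<le> 1" using d(2)[of 0] survival_le_1[OF b, of "{x0}" 0] by linarith
    then show ?thesis using 0 a(4) p d(1) by (simp add: mult_le_one)
  next
    case (Suc m)
    have "trans_prob a \<eta> * d \<le> trans_prob a \<eta> * survival {x0} m (shift a \<eta>)"
      using d(2) p(1) by (simp add: mult_left_mono)
    also have "\<dots> \<le> step_mean (survival {x0} m) a"
      by (rule step_mean_ge_jump[OF a(1,2) survival_nonneg])
    finally show ?thesis using Suc a(4) by simp
  qed
  then show ?thesis
    unfolding positive_avoidance_def using a(1) p(1) d(1) by (intro conjI exI[of _ "trans_prob a \<eta> * d"]) auto
qed

lemma unbounded_hitting_time_backward:
  assumes a: "a \<in> S" "\<eta> \<in> J" "lam \<eta> a > 0" "a \<noteq> x0"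
    and slow: "unbounded_hitting_time x0 (shift a \<eta>)"
  shows "unbounded_hitting_time x0 a"
proof -
  have p: "0 < trans_prob a \<eta>" using trans_prob_pos a by auto
  have "\<exists>n. T < mean_hitting_time {x0} n a" for T
  proof -
    obtain n where n: "T / trans_prob a \<eta> < mean_hitting_time {x0} n (shift a \<eta>)"
      using slow unfolding unbounded_hitting_time_def by blast
    have "T < trans_prob a \<eta> * mean_hitting_time {x0} n (shift a \<eta>)"
      using n p by (simp add: field_simps)
    also have "\<dots> \<le> step_mean (mean_hitting_time {x0} n) a"
      by (rule step_mean_ge_jump[OF a(1,2) mean_hitting_time_nonneg])
    also have "\<dots> \<le> mean_hitting_time {x0} (Suc n) a"
      using a(4) qrate_nonneg by simp
    finally show ?thesis by blast
  qed
  then show ?thesis unfolding unbounded_hitting_time_def using a(1) by blast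
qed

lemma path_reaches_neighbour:
  assumes "(x0, y) \<in> jump_rel\<^sup>*" "\<Phi> y" "\<not> \<Phi> x0"
    and backward: "\<And>a \<eta>. a \<in> S \<Longrightarrow> \<eta> \<in> J \<Longrightarrow> lam \<eta> a > 0 \<Longrightarrow> a \<noteq> x0 \<Longrightarrow> \<Phi> (shift a \<eta>) \<Longrightarrow> \<Phi> a"
  shows "\<exists>\<eta>\<in>J. lam \<eta> x0 > 0 \<and> \<Phi> (shift x0 \<eta>)"
proof -
  have "\<Phi> z \<or> (\<exists>\<eta>\<in>J. lam \<eta> x0 > 0 \<and> \<Phi> (shift x0 \<eta>))" if "(z, y) \<in> jump_rel\<^sup>*" for z
    using that
  proof (induction rule: converse_rtrancl_induct)
    case (step a b)
    then obtain \<eta> where "a \<in> S" "\<eta> \<in> J" "lam \<eta> a > 0" "b = shift a \<eta>"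
      unfolding jump_rel_def using mem_jumps by blast
    with step.IH backward show ?case by blast
  qed (use assms(2) in simp)
  with assms(1,3) show ?thesis by blast
qed

lemma neighbour_avoids_or_hits_slowly:
  assumes x0: "x0 \<in> S" "x0 \<le> N"
    and sub: "\<And>x. x \<in> S \<Longrightarrow> N < x \<Longrightarrow> 0 \<le> gen lam f1 x"
    and drift: "\<And>x. x \<in> S \<Longrightarrow> N < x \<Longrightarrow> gen lam f2 x \<le> C" "0 \<le> C"
    and f2_nonneg: "\<And>x. x \<in> S \<Longrightarrow> 0 \<le> f2 x"
    and dominated: "\<And>e. 0 < e \<Longrightarrow> \<exists>K\<ge>0. \<forall>x\<in>S. f1 x \<le> e * f2 x + K"
    and y: "y \<in> S" "(\<Sum>x\<le>N. \<bar>f1 x\<bar>) < f1 y"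
  shows "\<exists>\<eta>\<in>J. lam \<eta> x0 > 0 \<and>
    (positive_avoidance x0 (shift x0 \<eta>) \<or> unbounded_hitting_time x0 (shift x0 \<eta>))"
proof (rule path_reaches_neighbour[OF jump_rel_connected[OF x0(1) y(1)]])
  let ?\<Phi> = "\<lambda>z. positive_avoidance x0 z \<or> unbounded_hitting_time x0 z"
  show "?\<Phi> y"
  proof (rule disjCI)
    assume "\<not> unbounded_hitting_time x0 y"
    then obtain T where T: "\<And>n. mean_hitting_time {x0} n y \<le> T"
      unfolding unbounded_hitting_time_def using y(1) by (auto simp: not_less)
    have A: "{x0} \<subseteq> {..N}" using x0(2) by simp
    have "\<exists>d>0. \<forall>n. d \<le> survival {..N} n y"
    proof (rule bounded_hitting_time_imp_survival[OF y(1) _ _ drift(2) f2_nonneg dominated])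
      show "f1 x \<le> (\<Sum>x\<le>N. \<bar>f1 x\<bar>)" if "x \<in> {..N}" for x
        using member_le_sum[of x "{..N}" "\<lambda>x. \<bar>f1 x\<bar>"] that by simp
      show "mean_hitting_time {..N} n y \<le> T" for n
        using mean_hitting_time_antimono[OF y(1) A, of n] T[of n] by linarith
    qed (use sub drift y(2) in \<open>auto simp: sum_nonneg\<close>)
    then show "positive_avoidance x0 y"
      unfolding positive_avoidance_def using survival_antimono[OF y(1) A] y(1) by (meson order_trans)
  qed
  have "survival {x0} n x0 = 0" "mean_hitting_time {x0} n x0 = 0" for n
    by (cases n; simp)+
  then show "\<not> ?\<Phi> x0"
    unfolding positive_avoidance_def unbounded_hitting_time_def by (auto simp: not_le)
qed (use positive_avoidance_backward unbounded_hitting_time_backward in blast)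

end


section \<open>The driving i.i.d. sequence\<close>

lemma prob_space_uniform_unit: "prob_space (uniform_measure lborel {0..<1::real})"
  by (rule prob_space_uniform_measure) auto

lemma prob_space_exponential_1: "prob_space (density lborel (\<lambda>t. ennreal (exponential_density 1 t)))"
  using prob_space_exponential_density[of 1] by simp

lemma prob_space_base_measure: "prob_space base_measure"
  unfolding base_measure_def
  by (rule prob_space_pair[OF prob_space_uniform_unit prob_space_exponential_1])

lemma sets_base_measure: "sets base_measure = sets (borel \<Otimes>\<^sub>M borel)"
  unfolding base_measure_def by (intro sets_pair_measure_cong) auto

interpretation base: prob_space base_measure
  by (rule prob_space_base_measure)

interpretation iid: sequence_space base_measure ..

lemma Omega_eq_sequence_space: "Omega = iid.S"
  unfolding Omega_def ..

lemma prob_space_Omega: "prob_space Omega"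
  unfolding Omega_eq_sequence_space by (rule iid.prob_space_axioms)

interpretation Omega: prob_space Omega
  by (rule prob_space_Omega)

lemma space_Omega: "space Omega = UNIV"
  by (simp add: Omega_def base_measure_def space_PiM space_pair_measure)

text \<open>Splitting off the first coordinate of the i.i.d. sequence is the Markov property at the first jump.\<close>

lemma nn_integral_Omega_case_nat:
  assumes F[measurable]: "F \<in> borel_measurable Omega"
  shows "(\<integral>\<^sup>+\<omega>. F \<omega> \<partial>Omega) = (\<integral>\<^sup>+b. (\<integral>\<^sup>+\<omega>. F (case_nat b \<omega>) \<partial>Omega) \<partial>base_measure)"
proof -
  interpret pair_sigma_finite base_measure iid.S ..
  have F': "F \<in> borel_measurable iid.S" using F unfolding Omega_eq_sequence_space .
  have "(\<integral>\<^sup>+\<omega>. F \<omega> \<partial>iid.S) = (\<integral>\<^sup>+X. F ((\<lambda>(s, \<omega>). case_nat s \<omega>) X) \<partial>(base_measure \<Otimes>\<^sub>M iid.S))"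
    by (subst iid.PiM_iter[symmetric]) (simp add: nn_integral_distr F')
  also have "\<dots> = (\<integral>\<^sup>+b. \<integral>\<^sup>+\<omega>. F ((\<lambda>(s, \<omega>). case_nat s \<omega>) (b, \<omega>)) \<partial>iid.S \<partial>base_measure)"
    by (subst iid.nn_integral_fst) (use F' in simp_all)
  finally show ?thesis unfolding Omega_eq_sequence_space by simp
qed

lemma measurable_find:
  assumes "\<And>k. Measurable.pred M (P k)"
  shows "(\<lambda>u. find (\<lambda>k. P k u) xs) \<in> measurable M (count_space UNIV)"
proof (induction xs)
  case (Cons a xs)
  have "(\<lambda>u. if P a u then Some a else find (\<lambda>k. P k u) xs) \<in> measurable M (count_space UNIV)"
    by (rule measurable_If[OF _ Cons]) (use assms[of a] in \<open>auto simp: pred_def\<close>)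
  then show ?case by simp
qed simp

definition jump_list :: "(int \<Rightarrow> nat \<Rightarrow> real) \<Rightarrow> int list" where
  "jump_list lam = sorted_list_of_set (jumps lam)"

definition jump_cdf :: "(int \<Rightarrow> nat \<Rightarrow> real) \<Rightarrow> nat \<Rightarrow> nat \<Rightarrow> real" where
  "jump_cdf lam y k = (\<Sum>i<k. lam (jump_list lam ! i) y)"

definition jump_interval :: "(int \<Rightarrow> nat \<Rightarrow> real) \<Rightarrow> nat \<Rightarrow> nat \<Rightarrow> real set" where
  "jump_interval lam y k = {jump_cdf lam y k / qrate lam y ..< jump_cdf lam y (Suc k) / qrate lam y}"

lemma next_state_jump_cdf:
  "next_state lam y u =
    (case find (\<lambda>k. u * qrate lam y < jump_cdf lam y (Suc k)) [0..<length (jump_list lam)] of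
       None \<Rightarrow> y
     | Some k \<Rightarrow> shift y (jump_list lam ! k))"
  unfolding next_state_def jump_cdf_def jump_list_def Let_def ..

lemma measurable_next_state[measurable]: "next_state lam y \<in> measurable borel (count_space UNIV)"
proof -
  have "(\<lambda>u. find (\<lambda>k. u * qrate lam y < jump_cdf lam y (Suc k)) [0..<length (jump_list lam)])
      \<in> measurable borel (count_space UNIV)"
    by (rule measurable_find) measurable
  then show ?thesis
    unfolding next_state_jump_cdf by (rule measurable_compose) simp
qed

lemma sum_jumps_eq_sum_jump_list:
  assumes "finite (jumps lam)"
  shows "(\<Sum>\<eta>\<in>jumps lam. h \<eta>) = (\<Sum>k<length (jump_list lam). h (jump_list lam ! k))"
proof -
  have "distinct (jump_list lam)" "set (jump_list lam) = jumps lam"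
    using assms unfolding jump_list_def by simp_all
  then show ?thesis
    using sum.distinct_set_conv_list[of "jump_list lam" h] by (simp add: sum_list_sum_nth atLeast0LessThan)
qed

lemma mono_jump_cdf: "(\<And>\<eta>. 0 \<le> lam \<eta> y) \<Longrightarrow> mono (jump_cdf lam y)"
  unfolding jump_cdf_def by (intro monoI sum_mono2) auto

lemma jump_cdf_length: "finite (jumps lam) \<Longrightarrow> jump_cdf lam y (length (jump_list lam)) = qrate lam y"
  unfolding jump_cdf_def qrate_def by (simp add: sum_jumps_eq_sum_jump_list)

lemma unique_interval_of_mono:
  fixes c :: "nat \<Rightarrow> 'a::linorder"
  assumes c: "mono c" and v: "c 0 \<le> v" "v < c L"
  shows "\<exists>!k. k < L \<and> c k \<le> v \<and> v < c (Suc k)"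
proof (rule ex_ex1I)
  show "\<exists>k. k < L \<and> c k \<le> v \<and> v < c (Suc k)"
    using v(2)
  proof (induction L)
    case (Suc L)
    show ?case
    proof (cases "v < c L")
      case True
      then show ?thesis using Suc.IH less_SucI by blast
    next
      case False
      then show ?thesis using Suc.prems by (intro exI[of _ L]) simp
    qed
  qed (use v(1) in simp)
next
  fix k k'
  assume k: "k < L \<and> c k \<le> v \<and> v < c (Suc k)" and k': "k' < L \<and> c k' \<le> v \<and> v < c (Suc k')"
  show "k = k'"
  proof (rule ccontr)
    assume "k \<noteq> k'"
    then consider "Suc k \<le> k'" | "Suc k' \<le> k" by linarith
    then show False
    proof cases
      case 1
      then show False using monoD[OF c 1] k k' by (meson leD order_trans)
    next
      case 2
      then show False using monoD[OF c 2] k k' by (meson leD order_trans)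
    qed
  qed
qed

lemma next_state_eq_shift:
  assumes nonneg: "\<And>\<eta>. 0 \<le> lam \<eta> y" and k: "k < length (jump_list lam)"
    and u: "jump_cdf lam y k \<le> u * qrate lam y" "u * qrate lam y < jump_cdf lam y (Suc k)"
  shows "next_state lam y u = shift y (jump_list lam ! k)"
proof -
  have "\<not> u * qrate lam y < jump_cdf lam y (Suc j)" if "j < k" for j
    using monoD[OF mono_jump_cdf[of lam y, OF nonneg], of "Suc j" k] that u(1) by simp
  then have "find (\<lambda>j. u * qrate lam y < jump_cdf lam y (Suc j)) [0..<length (jump_list lam)] = Some k"
    unfolding find_Some_iff using k u(2) by auto
  then show ?thesis unfolding next_state_jump_cdf by simp
qed

text \<open>\<open>next_state lam y\<close> is the quantile function of the jump distribution at \<open>y\<close>: the \<open>k\<close>-th jump is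
  chosen on an interval of length \<open>lam (jump_list lam ! k) y / qrate lam y\<close>.\<close>

lemma next_state_indicator_sum:
  fixes g :: "nat \<Rightarrow> ennreal"
  assumes fin: "finite (jumps lam)" and q: "0 < qrate lam y" and nonneg: "\<And>\<eta>. 0 \<le> lam \<eta> y"
    and u: "u \<in> {0..<1}"
  shows "g (next_state lam y u) =
    (\<Sum>k<length (jump_list lam). g (shift y (jump_list lam ! k)) * indicator (jump_interval lam y k) u)"
proof -
  let ?v = "u * qrate lam y" and ?L = "length (jump_list lam)"
  have I_iff: "u \<in> jump_interval lam y k \<longleftrightarrow> jump_cdf lam y k \<le> ?v \<and> ?v < jump_cdf lam y (Suc k)" for k
    unfolding jump_interval_def using q by (simp add: field_simps)
  have "jump_cdf lam y 0 \<le> ?v"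
    using u q by (simp add: jump_cdf_def)
  moreover have "?v < jump_cdf lam y ?L"
    using u q by (simp add: jump_cdf_length[OF fin])
  ultimately have "\<exists>!k. k < ?L \<and> u \<in> jump_interval lam y k"
    unfolding I_iff by (rule unique_interval_of_mono[OF mono_jump_cdf[of lam y, OF nonneg]])
  then obtain k0 where k0: "k0 < ?L" "u \<in> jump_interval lam y k0"
    and unique: "\<And>k. k < ?L \<Longrightarrow> u \<in> jump_interval lam y k \<Longrightarrow> k = k0"
    by blast
  have "next_state lam y u = shift y (jump_list lam ! k0)"
    using next_state_eq_shift[OF nonneg k0(1)] k0(2) unfolding I_iff by blast
  then have "g (next_state lam y u) = (\<Sum>k<?L. if k = k0 then g (shift y (jump_list lam ! k)) else 0)"
    using k0(1) by simp
  also have "\<dots> = (\<Sum>k<?L. g (shift y (jump_list lam ! k)) * indicator (jump_interval lam y k) u)"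
  proof (rule sum.cong[OF refl])
    fix k
    assume "k \<in> {..<?L}"
    then have "u \<in> jump_interval lam y k \<longleftrightarrow> k = k0" using unique k0(2) by blast
    then show "(if k = k0 then g (shift y (jump_list lam ! k)) else 0) =
        g (shift y (jump_list lam ! k)) * indicator (jump_interval lam y k) u"
      by (simp add: indicator_def)
  qed
  finally show ?thesis .
qed

lemma nn_integral_next_state:
  assumes fin: "finite (jumps lam)" and q: "0 < qrate lam y" and nonneg: "\<And>\<eta>. 0 \<le> lam \<eta> y"
  shows "(\<integral>\<^sup>+u. g (next_state lam y u) \<partial>uniform_measure lborel {0..<1}) =
    (\<Sum>\<eta>\<in>jumps lam. ennreal (lam \<eta> y / qrate lam y) * g (shift y \<eta>))"
proof -
  let ?U = "uniform_measure lborel {0..<1::real}" and ?js = "jump_list lam"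
  let ?I = "jump_interval lam y"
  have measure_I: "emeasure ?U (?I k) = ennreal (lam (?js ! k) y / qrate lam y)" if "k < length ?js" for k
  proof -
    have mono: "mono (jump_cdf lam y)" by (rule mono_jump_cdf[of lam y, OF nonneg])
    have "0 \<le> jump_cdf lam y k" using monoD[OF mono, of 0 k] by (simp add: jump_cdf_def)
    moreover have "jump_cdf lam y (Suc k) \<le> qrate lam y"
      using monoD[OF mono, of "Suc k" "length ?js"] that jump_cdf_length[OF fin] by simp
    ultimately have "?I k \<subseteq> {0..<1}"
      unfolding jump_interval_def using q by (auto simp: field_simps)
    then have "{0..<1} \<inter> ?I k = ?I k" by blast
    moreover have "emeasure ?U (?I k) = emeasure lborel ({0..<1} \<inter> ?I k) / emeasure lborel {0..<1::real}"
      by (rule emeasure_uniform_measure) (simp_all add: jump_interval_def)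
    ultimately have "emeasure ?U (?I k) = emeasure lborel (?I k)"
      by (simp add: divide_ennreal_def)
    also have "\<dots> = ennreal (jump_cdf lam y (Suc k) / qrate lam y - jump_cdf lam y k / qrate lam y)"
      using monoD[OF mono, of k "Suc k"] q unfolding jump_interval_def by (simp add: divide_right_mono)
    also have "\<dots> = ennreal (lam (?js ! k) y / qrate lam y)"
      by (simp add: jump_cdf_def diff_divide_distrib[symmetric])
    finally show ?thesis .
  qed
  have "(\<integral>\<^sup>+u. g (next_state lam y u) \<partial>?U) =
      (\<integral>\<^sup>+u. (\<Sum>k<length ?js. g (shift y (?js ! k)) * indicator (?I k) u) \<partial>?U)"
    by (rule nn_integral_cong_AE, rule AE_uniform_measureI)
      (auto simp: jump_interval_def next_state_indicator_sum[OF fin q nonneg])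
  also have "\<dots> = (\<Sum>k<length ?js. \<integral>\<^sup>+u. g (shift y (?js ! k)) * indicator (?I k) u \<partial>?U)"
    by (rule nn_integral_sum) (simp add: jump_interval_def)
  also have "\<dots> = (\<Sum>k<length ?js. g (shift y (?js ! k)) * emeasure ?U (?I k))"
    by (rule sum.cong[OF refl], rule nn_integral_cmult_indicator) (simp add: jump_interval_def)
  also have "\<dots> = (\<Sum>\<eta>\<in>jumps lam. ennreal (lam \<eta> y / qrate lam y) * g (shift y \<eta>))"
    by (simp add: sum_jumps_eq_sum_jump_list[OF fin] measure_I mult.commute)
  finally show ?thesis .
qed

lemma measurable_Omega_component: "(\<lambda>\<omega>. \<omega> n) \<in> measurable Omega (borel \<Otimes>\<^sub>M borel)"
  using measurable_component_singleton[of n UNIV "\<lambda>_. base_measure"]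
  unfolding Omega_def by (simp add: measurable_cong_sets[OF refl sets_base_measure])

lemma measurable_Omega_fst: "(\<lambda>\<omega>. fst (\<omega> n)) \<in> borel_measurable Omega"
  using measurable_compose[OF measurable_Omega_component measurable_fst] by simp

lemma measurable_Omega_snd: "(\<lambda>\<omega>. snd (\<omega> n)) \<in> borel_measurable Omega"
  using measurable_compose[OF measurable_Omega_component measurable_snd] by simp

lemma measurable_jchain[measurable]: "(\<lambda>\<omega>. jchain lam x \<omega> n) \<in> measurable Omega (count_space UNIV)"
proof (induction n)
  case (Suc n)
  have "(\<lambda>\<omega>. (\<lambda>i \<omega>. next_state lam i (fst (\<omega> n))) (jchain lam x \<omega> n) \<omega>) \<in> measurable Omega (count_space UNIV)"
    by (rule measurable_compose_countable[OF _ Suc])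
      (rule measurable_compose[OF measurable_Omega_fst measurable_next_state])
  then show ?case by simp
qed simp

lemma measurable_hold[measurable]: "(\<lambda>\<omega>. hold lam x \<omega> n) \<in> borel_measurable Omega"
proof -
  have "(\<lambda>\<omega>. (\<lambda>i \<omega>. snd (\<omega> n) / qrate lam i) (jchain lam x \<omega> n) \<omega>) \<in> borel_measurable Omega"
    by (rule measurable_compose_countable[OF _ measurable_jchain]) (use measurable_Omega_snd in measurable)
  then show ?thesis unfolding hold_def by simp
qed

lemma nn_integral_exponential_linear:
  assumes "0 \<le> a"
  shows "(\<integral>\<^sup>+t. ennreal (a * t) \<partial>density lborel (\<lambda>t. ennreal (exponential_density 1 t))) = ennreal a"
proof -
  have "(\<integral>\<^sup>+t. ennreal (a * t) \<partial>density lborel (\<lambda>t. ennreal (exponential_density 1 t))) =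
      (\<integral>\<^sup>+t. ennreal a * ennreal (exponential_density 1 t * t ^ 1) \<partial>lborel)"
    using assms
    by (subst nn_integral_density)
      (auto intro!: nn_integral_cong simp: exponential_density_def ennreal_neg ennreal_mult'[symmetric]
        ennreal_mult[symmetric] mult_ac)
  also have "\<dots> = ennreal a"
    using nn_integral_erlang_ith_moment[of 1 0 1] by (simp add: nn_integral_cmult)
  finally show ?thesis .
qed

lemma nn_integral_base_measure:
  assumes G[measurable]: "G \<in> borel_measurable borel" and a: "0 \<le> a"
  shows "(\<integral>\<^sup>+b. ennreal (a * snd b) + G (fst b) \<partial>base_measure) =
    ennreal a + (\<integral>\<^sup>+u. G u \<partial>uniform_measure lborel {0..<1})"
proof -
  let ?U = "uniform_measure lborel {0..<1::real}"
  let ?E = "density lborel (\<lambda>t. ennreal (exponential_density 1 t))"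
  interpret E: prob_space ?E by (rule prob_space_exponential_1)
  interpret U: prob_space ?U by (rule prob_space_uniform_unit)
  have "(\<integral>\<^sup>+b. ennreal (a * snd b) + G (fst b) \<partial>base_measure) =
      (\<integral>\<^sup>+u. \<integral>\<^sup>+t. ennreal (a * snd (u, t)) + G (fst (u, t)) \<partial>?E \<partial>?U)"
    unfolding base_measure_def
    by (subst E.nn_integral_fst[symmetric]) (auto intro!: measurable_compose[OF measurable_fst G])
  also have "\<dots> = (\<integral>\<^sup>+u. ennreal a + G u \<partial>?U)"
    using E.emeasure_space_1
    by (intro nn_integral_cong) (simp add: nn_integral_add nn_integral_exponential_linear[OF a])
  also have "\<dots> = ennreal a + (\<integral>\<^sup>+u. G u \<partial>?U)"
    by (simp add: nn_integral_add U.emeasure_space_1)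
  finally show ?thesis .
qed

lemma AE_Omega_clocks_nonneg: "AE \<omega> in Omega. \<forall>k. 0 \<le> snd (\<omega> k)"
proof -
  let ?U = "uniform_measure lborel {0..<1::real}"
  let ?E = "density lborel (\<lambda>t. ennreal (exponential_density 1 t))"
  interpret E: prob_space ?E by (rule prob_space_exponential_1)
  interpret U: prob_space ?U by (rule prob_space_uniform_unit)
  interpret P: pair_prob_space ?U ?E ..
  have "AE t in ?E. 0 \<le> t"
    by (subst AE_density) (auto simp: exponential_density_def intro!: AE_I2 split: if_splits)
  then have "AE u in ?U. AE t in ?E. 0 \<le> snd (u, t)"
    by simp
  then have "AE b in base_measure. 0 \<le> snd b"
    unfolding base_measure_def by (intro P.AE_pair_measure) measurable
  then have "AE \<omega> in Omega. 0 \<le> snd (\<omega> k)" for k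
    unfolding Omega_def
    using AE_PiM_component[of UNIV "\<lambda>_. base_measure" k "\<lambda>b. 0 \<le> snd b"] prob_space_base_measure by simp
  then show ?thesis
    by (simp add: AE_all_countable)
qed

lemma jchain_case_nat_Suc: "jchain lam x (case_nat b \<omega>) (Suc k) = jchain lam (next_state lam x (fst b)) \<omega> k"
  by (induction k) auto

lemma hold_case_nat_0: "hold lam x (case_nat b \<omega>) 0 = snd b / qrate lam x"
  by (simp add: hold_def)

lemma hold_case_nat_Suc: "hold lam x (case_nat b \<omega>) (Suc k) = hold lam (next_state lam x (fst b)) \<omega> k"
  by (simp add: hold_def jchain_case_nat_Suc del: jchain.simps(2))

lemma jchain_avoids_start_iff: "(\<forall>j\<le>k. jchain lam x \<omega> j \<noteq> x) \<longleftrightarrow> False"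
  by (metis jchain.simps(1) le0)

lemma all_le_Suc_iff: "(\<forall>k\<le>Suc n. P k) \<longleftrightarrow> P 0 \<and> (\<forall>k\<le>n. P (Suc k))"
  by (metis Suc_le_mono le0 not0_implies_Suc)


section \<open>First-jump analysis and null recurrence\<close>

lemma affine_bound_of_ratio_at_top:
  fixes f g :: "nat \<Rightarrow> real"
  assumes g: "\<forall>x\<in>S. 0 \<le> g x"
    and f: "filterlim f at_top (at_top_in S)"
    and ratio: "filterlim (\<lambda>x. g x / f x) at_top (at_top_in S)"
    and e: "0 < e"
  shows "\<exists>K\<ge>0. \<forall>x\<in>S. f x \<le> e * g x + K"
proof -
  have "eventually (\<lambda>x. 0 < f x) (at_top_in S)"
    using f by (simp add: filterlim_at_top_dense)
  moreover have "eventually (\<lambda>x. 1 / e \<le> g x / f x) (at_top_in S)"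
    using ratio by (simp add: filterlim_at_top)
  ultimately have "eventually (\<lambda>x. 0 < f x \<and> 1 / e \<le> g x / f x) (at_top_in S)"
    by (rule eventually_conj)
  then obtain N where N: "\<And>x. N \<le> x \<Longrightarrow> x \<in> S \<Longrightarrow> 0 < f x \<and> 1 / e \<le> g x / f x"
    unfolding eventually_inf_principal eventually_at_top_linorder by blast
  define K where "K = (\<Sum>x<N. \<bar>f x\<bar>)"
  have "f x \<le> e * g x + K" if x: "x \<in> S" for x
  proof (cases "N \<le> x")
    case True
    then have "1 / e \<le> g x / f x" "0 < f x"
      using N[OF True x] by auto
    then have "f x \<le> e * g x"
      using e by (simp add: field_simps)
    then show ?thesis unfolding K_def by (simp add: sum_nonneg add_increasing2)
  next
    case False
    then have "\<bar>f x\<bar> \<le> K" unfolding K_def by (intro member_le_sum) auto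
    then show ?thesis using e g x by (simp add: add_increasing)
  qed
  moreover have "0 \<le> K" unfolding K_def by (simp add: sum_nonneg)
  ultimately show ?thesis by blast
qed

context rate_chain
begin

lemma nn_integral_Omega_first_jump:
  assumes F[measurable]: "F \<in> borel_measurable Omega"
    and H[measurable]: "\<And>y. H y \<in> borel_measurable Omega"
    and F_split: "\<And>b \<omega>. F (case_nat b \<omega>) = ennreal (a * snd b) + H (next_state lam x (fst b)) \<omega>"
    and x: "x \<in> S" and a: "0 \<le> a"
    and H_eq: "\<And>y. y \<in> S \<Longrightarrow> (\<integral>\<^sup>+\<omega>. H y \<omega> \<partial>Omega) = ennreal (V y)"
    and V: "\<And>y. y \<in> S \<Longrightarrow> 0 \<le> V y"
  shows "(\<integral>\<^sup>+\<omega>. F \<omega> \<partial>Omega) = ennreal (a + step_mean V x)"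
proof -
  let ?G = "\<lambda>y. \<integral>\<^sup>+\<omega>. H y \<omega> \<partial>Omega"
  have summand: "ennreal (lam \<eta> x / q x) * ?G (shift x \<eta>) = ennreal (trans_prob x \<eta> * V (shift x \<eta>))
      \<and> 0 \<le> trans_prob x \<eta> * V (shift x \<eta>)" for \<eta>
  proof (cases "lam \<eta> x = 0")
    case False
    then have "shift x \<eta> \<in> S" by (rule shift_mem[OF x])
    then show ?thesis
      using H_eq V trans_prob_nonneg[of x \<eta>] by (simp add: trans_prob_def[symmetric] ennreal_mult)
  qed (simp add: trans_prob_def)
  have "(\<integral>\<^sup>+\<omega>. F \<omega> \<partial>Omega) = (\<integral>\<^sup>+b. ennreal (a * snd b) + ?G (next_state lam x (fst b)) \<partial>base_measure)"
    by (simp add: nn_integral_Omega_case_nat[OF F] F_split nn_integral_add Omega.emeasure_space_1)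
  also have "\<dots> = ennreal a + (\<integral>\<^sup>+u. ?G (next_state lam x u) \<partial>uniform_measure lborel {0..<1})"
    by (rule nn_integral_base_measure[OF _ a]) simp
  also have "(\<integral>\<^sup>+u. ?G (next_state lam x u) \<partial>uniform_measure lborel {0..<1})
      = (\<Sum>\<eta>\<in>J. ennreal (lam \<eta> x / q x) * ?G (shift x \<eta>))"
    by (rule nn_integral_next_state[OF finite_jumps qrate_pos[OF x] rates_nonneg])
  also have "\<dots> = ennreal (step_mean V x)"
    unfolding step_mean_def using summand by (simp add: sum_ennreal)
  also have "ennreal a + ennreal (step_mean V x) = ennreal (a + step_mean V x)"
    using a step_mean_nonneg[OF x V] by (simp add: ennreal_plus)
  finally show ?thesis .
qed

definition avoidance_prob :: "nat \<Rightarrow> nat \<Rightarrow> nat \<Rightarrow> ennreal" where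
  "avoidance_prob x0 x n = (\<integral>\<^sup>+\<omega>. (if \<forall>k\<le>n. jchain lam x \<omega> k \<noteq> x0 then 1 else 0) \<partial>Omega)"

definition avoidance_time :: "nat \<Rightarrow> nat \<Rightarrow> nat \<Rightarrow> ennreal" where
  "avoidance_time x0 x n =
     (\<integral>\<^sup>+\<omega>. (\<Sum>k<n. if \<forall>j\<le>k. jchain lam x \<omega> j \<noteq> x0 then ennreal (hold lam x \<omega> k) else 0) \<partial>Omega)"

lemma avoidance_prob_eq_survival: "x \<in> S \<Longrightarrow> avoidance_prob x0 x n = ennreal (survival {x0} n x)"
proof (induction n arbitrary: x)
  case 0
  show ?case unfolding avoidance_prob_def using Omega.emeasure_space_1 by simp
next
  case (Suc n)
  show ?case
  proof (cases "x = x0")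
    case False
    have "avoidance_prob x0 x (Suc n) = ennreal (0 + step_mean (survival {x0} n) x)"
      unfolding avoidance_prob_def
    proof (rule nn_integral_Omega_first_jump[OF _ _ _ Suc.prems order_refl])
      show "(\<integral>\<^sup>+\<omega>. (if \<forall>k\<le>n. jchain lam y \<omega> k \<noteq> x0 then 1 else 0) \<partial>Omega) = ennreal (survival {x0} n y)"
        if "y \<in> S" for y
        using Suc.IH[OF that] unfolding avoidance_prob_def .
    qed (use False in \<open>simp_all add: all_le_Suc_iff jchain_case_nat_Suc survival_nonneg del: jchain.simps(2)\<close>)
    then show ?thesis using False by simp
  next
    case True
    show ?thesis unfolding True avoidance_prob_def jchain_avoids_start_iff by simp
  qed
qed

lemma avoidance_time_eq_mean_hitting_time:
  "x \<in> S \<Longrightarrow> avoidance_time x0 x n = ennreal (mean_hitting_time {x0} n x)"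
proof (induction n arbitrary: x)
  case (Suc n)
  show ?case
  proof (cases "x = x0")
    case False
    have "avoidance_time x0 x (Suc n) = ennreal (1 / q x + step_mean (mean_hitting_time {x0} n) x)"
      unfolding avoidance_time_def
    proof (rule nn_integral_Omega_first_jump[OF _ _ _ Suc.prems])
      show "(\<integral>\<^sup>+\<omega>. (\<Sum>k<n. if \<forall>j\<le>k. jchain lam y \<omega> j \<noteq> x0 then ennreal (hold lam y \<omega> k) else 0) \<partial>Omega)
          = ennreal (mean_hitting_time {x0} n y)" if "y \<in> S" for y
        using Suc.IH[OF that] unfolding avoidance_time_def .
    qed (use False qrate_nonneg in \<open>simp_all add: sum.lessThan_Suc_shift all_le_Suc_iff jchain_case_nat_Suc
        hold_case_nat_0 hold_case_nat_Suc mean_hitting_time_nonneg del: jchain.simps(2) sum.lessThan_Suc cong: if_cong\<close>)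
    then show ?thesis using False by simp
  next
    case True
    show ?thesis unfolding True avoidance_time_def jchain_avoids_start_iff by simp
  qed
qed (simp add: avoidance_time_def)

lemma no_return_prob:
  assumes x0: "x0 \<in> S"
  shows "emeasure Omega {\<omega> \<in> space Omega. \<forall>m\<le>n. jchain lam x0 \<omega> (Suc m) \<noteq> x0} =
    ennreal (step_mean (survival {x0} n) x0)"
proof -
  let ?A = "{\<omega> \<in> space Omega. \<forall>m\<le>n. jchain lam x0 \<omega> (Suc m) \<noteq> x0}"
  have "?A \<in> sets Omega" by measurable
  then have "emeasure Omega ?A = (\<integral>\<^sup>+\<omega>. indicator ?A \<omega> \<partial>Omega)"
    by (rule nn_integral_indicator[symmetric])
  also have "\<dots> = (\<integral>\<^sup>+\<omega>. (if \<forall>m\<le>n. jchain lam x0 \<omega> (Suc m) \<noteq> x0 then 1 else 0) \<partial>Omega)"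
    by (simp add: indicator_def of_bool_def space_Omega)
  also have "\<dots> = ennreal (0 + step_mean (survival {x0} n) x0)"
  proof (rule nn_integral_Omega_first_jump[OF _ _ _ x0 order_refl])
    show "(\<integral>\<^sup>+\<omega>. (if \<forall>k\<le>n. jchain lam y \<omega> k \<noteq> x0 then 1 else 0) \<partial>Omega) = ennreal (survival {x0} n y)"
      if "y \<in> S" for y
      using avoidance_prob_eq_survival[OF that] unfolding avoidance_prob_def .
  qed (simp_all add: jchain_case_nat_Suc survival_nonneg del: jchain.simps(2))
  finally show ?thesis by simp
qed

lemma truncated_return_time_le:
  assumes clocks: "\<forall>k. 0 \<le> snd (\<omega> k)"
  shows "(\<Sum>k<n. if \<forall>j<k. jchain lam x0 \<omega> (Suc j) \<noteq> x0 then ennreal (hold lam x0 \<omega> k) else 0)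
    \<le> return_time lam x0 \<omega>"
proof (cases "\<exists>m\<ge>1. jchain lam x0 \<omega> m = x0")
  case True
  define \<tau> where "\<tau> = (LEAST m. m \<ge> 1 \<and> jchain lam x0 \<omega> m = x0)"
  have \<tau>: "1 \<le> \<tau>" "jchain lam x0 \<omega> \<tau> = x0"
    using LeastI_ex[OF True] unfolding \<tau>_def by auto
  have before_\<tau>: "k < \<tau>" if "\<forall>j<k. jchain lam x0 \<omega> (Suc j) \<noteq> x0" for k
    using that \<tau> by (metis Suc_pred' not_less_eq less_le_trans zero_less_one)
  have "(\<Sum>k<n. if \<forall>j<k. jchain lam x0 \<omega> (Suc j) \<noteq> x0 then ennreal (hold lam x0 \<omega> k) else 0)
      = (\<Sum>k\<in>{k\<in>{..<n}. \<forall>j<k. jchain lam x0 \<omega> (Suc j) \<noteq> x0}. ennreal (hold lam x0 \<omega> k))"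
    by (rule sum.inter_filter[symmetric]) simp
  also have "\<dots> \<le> (\<Sum>k<\<tau>. ennreal (hold lam x0 \<omega> k))"
    using before_\<tau> by (intro sum_mono2) auto
  also have "\<dots> = ennreal (\<Sum>k<\<tau>. hold lam x0 \<omega> k)"
    using clocks qrate_nonneg by (simp add: sum_ennreal hold_def)
  also have "\<dots> = return_time lam x0 \<omega>"
    unfolding return_time_def \<tau>_def using True by simp
  finally show ?thesis .
qed (auto simp: return_time_def)

lemma return_time_ge:
  assumes x0: "x0 \<in> S"
  shows "ennreal (1 / q x0 + step_mean (mean_hitting_time {x0} n) x0) \<le> (\<integral>\<^sup>+\<omega>. return_time lam x0 \<omega> \<partial>Omega)"
proof -
  let ?T = "\<lambda>\<omega>. \<Sum>k<Suc n. if \<forall>j<k. jchain lam x0 \<omega> (Suc j) \<noteq> x0 then ennreal (hold lam x0 \<omega> k) else 0"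
  have "ennreal (1 / q x0 + step_mean (mean_hitting_time {x0} n) x0) = (\<integral>\<^sup>+\<omega>. ?T \<omega> \<partial>Omega)"
  proof (rule nn_integral_Omega_first_jump[symmetric, OF _ _ _ x0])
    show "(\<integral>\<^sup>+\<omega>. (\<Sum>k<n. if \<forall>j\<le>k. jchain lam y \<omega> j \<noteq> x0 then ennreal (hold lam y \<omega> k) else 0) \<partial>Omega)
        = ennreal (mean_hitting_time {x0} n y)" if "y \<in> S" for y
      using avoidance_time_eq_mean_hitting_time[OF that] unfolding avoidance_time_def .
  qed (use qrate_nonneg in \<open>simp_all add: less_Suc_eq_le sum.lessThan_Suc_shift jchain_case_nat_Suc hold_case_nat_0
      hold_case_nat_Suc mean_hitting_time_nonneg del: jchain.simps(2) sum.lessThan_Suc cong: if_cong\<close>)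
  also have "\<dots> \<le> (\<integral>\<^sup>+\<omega>. return_time lam x0 \<omega> \<partial>Omega)"
    using AE_Omega_clocks_nonneg
    by (rule nn_integral_mono_AE[OF eventually_mono]) (rule truncated_return_time_le)
  finally show ?thesis .
qed

lemma return_prob_le:
  assumes x0: "x0 \<in> S" and no_return: "\<And>n. c \<le> step_mean (survival {x0} n) x0"
  shows "Omega.prob {\<omega> \<in> space Omega. \<exists>n\<ge>1. jchain lam x0 \<omega> n = x0} \<le> 1 - c"
proof -
  define R where "R = {\<omega> \<in> space Omega. \<exists>n\<ge>1. jchain lam x0 \<omega> n = x0}"
  define B where "B n = {\<omega> \<in> space Omega. \<forall>m\<le>n. jchain lam x0 \<omega> (Suc m) \<noteq> x0}" for n
  have B_sets: "B n \<in> sets Omega" for n unfolding B_def by measurable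
  have "c \<le> Omega.prob (B n)" for n
    using no_return[of n] no_return_prob[OF x0, of n] step_mean_nonneg[OF x0 survival_nonneg]
    unfolding B_def by (simp add: Omega.emeasure_eq_measure)
  moreover have "decseq B"
    unfolding decseq_def B_def by auto
  then have "(\<lambda>n. Omega.prob (B n)) \<longlonglongrightarrow> Omega.prob (\<Inter>n. B n)"
    by (intro Omega.finite_Lim_measure_decseq) (auto simp: B_sets)
  ultimately have never_returns: "c \<le> Omega.prob (\<Inter>n. B n)"
    by (intro LIMSEQ_le_const[of "\<lambda>n. Omega.prob (B n)"]) auto
  have "(\<Inter>n. B n) = space Omega - R"
  proof (intro equalityI subsetI)
    fix \<omega>
    assume "\<omega> \<in> (\<Inter>n. B n)"
    then have "\<omega> \<in> space Omega" "jchain lam x0 \<omega> (Suc m) \<noteq> x0" for m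
      unfolding B_def by blast+
    then show "\<omega> \<in> space Omega - R"
      unfolding R_def by (auto simp: Suc_le_eq gr0_conv_Suc simp del: jchain.simps(2))
  next
    fix \<omega>
    assume "\<omega> \<in> space Omega - R"
    then show "\<omega> \<in> (\<Inter>n. B n)"
      unfolding B_def R_def by (auto simp del: jchain.simps(2))
  qed
  moreover have "R \<in> sets Omega"
    unfolding R_def by measurable
  ultimately show ?thesis
    using never_returns unfolding R_def[symmetric] by (simp add: Omega.prob_compl)
qed

lemma not_recurrent_if_neighbour_avoids:
  assumes x0: "x0 \<in> S" and \<eta>: "\<eta> \<in> J" "lam \<eta> x0 > 0"
    and avoid: "positive_avoidance x0 (shift x0 \<eta>)"
  shows "\<not> recurrent_chain S lam"
proof
  assume recurrent: "recurrent_chain S lam"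
  obtain d where d: "0 < d" "\<And>n. d \<le> survival {x0} n (shift x0 \<eta>)"
    using avoid unfolding positive_avoidance_def by blast
  have "trans_prob x0 \<eta> * d \<le> step_mean (survival {x0} n) x0" for n
  proof -
    have "trans_prob x0 \<eta> * d \<le> trans_prob x0 \<eta> * survival {x0} n (shift x0 \<eta>)"
      using d(2) trans_prob_nonneg by (simp add: mult_left_mono)
    also have "\<dots> \<le> step_mean (survival {x0} n) x0"
      by (rule step_mean_ge_jump[OF x0 \<eta>(1) survival_nonneg])
    finally show ?thesis .
  qed
  then have "Omega.prob {\<omega> \<in> space Omega. \<exists>n\<ge>1. jchain lam x0 \<omega> n = x0} \<le> 1 - trans_prob x0 \<eta> * d"
    by (rule return_prob_le[OF x0])
  moreover have "Omega.prob {\<omega> \<in> space Omega. \<exists>n\<ge>1. jchain lam x0 \<omega> n = x0} = 1"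
    using recurrent x0 unfolding recurrent_chain_def by (simp add: Omega.emeasure_eq_measure)
  moreover have "0 < trans_prob x0 \<eta> * d"
    using trans_prob_pos[OF x0 \<eta>(2)] d(1) by simp
  ultimately show False by simp
qed

lemma return_time_infinite_if_neighbour_slow:
  assumes x0: "x0 \<in> S" and \<eta>: "\<eta> \<in> J" "lam \<eta> x0 > 0"
    and slow: "unbounded_hitting_time x0 (shift x0 \<eta>)"
  shows "(\<integral>\<^sup>+\<omega>. return_time lam x0 \<omega> \<partial>Omega) = \<infinity>"
proof -
  have p: "0 < trans_prob x0 \<eta>" by (rule trans_prob_pos[OF x0 \<eta>(2)])
  have lower: "ennreal T \<le> (\<integral>\<^sup>+\<omega>. return_time lam x0 \<omega> \<partial>Omega)" for T
  proof -
    obtain n where n: "T / trans_prob x0 \<eta> < mean_hitting_time {x0} n (shift x0 \<eta>)"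
      using slow unfolding unbounded_hitting_time_def by blast
    have "T \<le> trans_prob x0 \<eta> * mean_hitting_time {x0} n (shift x0 \<eta>)"
      using n p by (simp add: field_simps)
    also have "\<dots> \<le> step_mean (mean_hitting_time {x0} n) x0"
      by (rule step_mean_ge_jump[OF x0 \<eta>(1) mean_hitting_time_nonneg])
    also have "\<dots> \<le> 1 / q x0 + step_mean (mean_hitting_time {x0} n) x0"
      using qrate_nonneg by simp
    finally show ?thesis
      using return_time_ge[OF x0, of n] by (meson ennreal_leI order_trans)
  qed
  show ?thesis
  proof (cases "\<integral>\<^sup>+\<omega>. return_time lam x0 \<omega> \<partial>Omega" rule: ennreal_cases)
    case (real r)
    then have "ennreal (r + 1) \<le> ennreal r" using lower by metis
    then show ?thesis using real by simp
  qed simp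
qed

theorem null_recurrent:
  fixes f1 f2 :: "nat \<Rightarrow> real"
  assumes recurrent: "recurrent_chain S lam"
    and f2_nonneg: "\<forall>x\<in>S. 0 \<le> f2 x"
    and lim1: "filterlim f1 at_top (at_top_in S)"
    and lim2: "filterlim (\<lambda>x. f2 x / f1 x) at_top (at_top_in S)"
    and gen1: "eventually (\<lambda>x. x \<in> S \<longrightarrow> 0 \<le> gen lam f1 x) at_top"
    and gen2: "\<exists>C>0. eventually (\<lambda>x. x \<in> S \<longrightarrow> gen lam f2 x \<le> C) at_top"
  shows "null_recurrent_chain S lam"
  unfolding null_recurrent_chain_def
proof (intro conjI ballI recurrent)
  fix x0
  assume x0: "x0 \<in> S"
  obtain N1 where N1: "\<And>x. N1 \<le> x \<Longrightarrow> x \<in> S \<Longrightarrow> 0 \<le> gen lam f1 x"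
    using gen1 unfolding eventually_at_top_linorder by blast
  obtain C N2 where C: "0 < C" and N2: "\<And>x. N2 \<le> x \<Longrightarrow> x \<in> S \<Longrightarrow> gen lam f2 x \<le> C"
    using gen2 unfolding eventually_at_top_linorder by blast
  define N where "N = N1 + N2 + x0"
  obtain y where y: "y \<in> S" "(\<Sum>x\<le>N. \<bar>f1 x\<bar>) < f1 y"
  proof -
    have "eventually (\<lambda>x. (\<Sum>x\<le>N. \<bar>f1 x\<bar>) < f1 x) (at_top_in S)"
      using lim1 by (simp add: filterlim_at_top_dense)
    then obtain N' where "\<And>x. N' \<le> x \<Longrightarrow> x \<in> S \<Longrightarrow> (\<Sum>x\<le>N. \<bar>f1 x\<bar>) < f1 x"
      unfolding eventually_inf_principal eventually_at_top_linorder by blast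
    moreover obtain z where "z \<in> S" "N' \<le> z"
      using infinite_states unfolding infinite_nat_iff_unbounded_le by blast
    ultimately show ?thesis using that by blast
  qed
  have "\<exists>\<eta>\<in>J. lam \<eta> x0 > 0 \<and>
      (positive_avoidance x0 (shift x0 \<eta>) \<or> unbounded_hitting_time x0 (shift x0 \<eta>))"
    by (rule neighbour_avoids_or_hits_slowly[where C = C, OF x0 _ _ _ _ _ affine_bound_of_ratio_at_top[OF f2_nonneg lim1 lim2] y])
      (use N1 N2 C f2_nonneg in \<open>auto simp: N_def\<close>)
  then show "(\<integral>\<^sup>+\<omega>. return_time lam x0 \<omega> \<partial>Omega) = \<infinity>"
    using not_recurrent_if_neighbour_avoids[OF x0] return_time_infinite_if_neighbour_slow[OF x0] recurrent
    by blast
qed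

end

theorem mainTheorem5:
  fixes S :: "nat set" and lam :: "int \<Rightarrow> nat \<Rightarrow> real" and f1 f2 :: "nat \<Rightarrow> real"
  assumes S_inf: "infinite S"
    and Gamma: "\<exists>\<Gamma>. finite \<Gamma> \<and> (\<forall>\<eta>. \<eta> \<notin> \<Gamma> \<longrightarrow> (\<forall>x. lam \<eta> x = 0))"
    and nonneg: "\<And>\<eta> x. lam \<eta> x \<ge> 0"
    and stay: "\<And>\<eta> x. x \<in> S \<Longrightarrow> int x + \<eta> \<notin> int ` S \<Longrightarrow> lam \<eta> x = 0"
    and irred: "irreducible_chain S lam"
    and recur: "recurrent_chain S lam"
    and f1_nonneg: "\<forall>x\<in>S. f1 x \<ge> 0"
    and f2_nonneg: "\<forall>x\<in>S. f2 x \<ge> 0"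
    and lim1: "filterlim f1 at_top (at_top_in S)"
    and lim2: "filterlim (\<lambda>x. f2 x / f1 x) at_top (at_top_in S)"
    and gen1: "eventually (\<lambda>x. x \<in> S \<longrightarrow> gen lam f1 x \<ge> 0) at_top"
    and gen2: "\<exists>C>0. eventually (\<lambda>x. x \<in> S \<longrightarrow> gen lam f2 x \<le> C) at_top"
  shows "null_recurrent_chain S lam"
proof -
  interpret rate_chain S lam
    by unfold_locales (fact S_inf Gamma nonneg stay irred)+
  show ?thesis
    by (rule null_recurrent[OF recur f2_nonneg lim1 lim2 gen1 gen2])
qed

end
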